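(* Let $(V_o,w_o,\mu_o)$ be a simple weighted graph with adapted weight $\sigma_o$, fix $\bar x\in V_o$, and let $(V,w,\mu)$ be its modified graph with weight $\mathfrak n$ and adapted path metric $d_\sigma$, with edge set $E$. Assume the balls of $(V,d_\sigma)$ are finite. For $n\in\mathbb N$ let $R_n=2^{n+4}$ and set: - $B_n^o=B_{d_\sigma}(\bar x,R_n-1)\cap V_o$; - $E^o_n=\{(x,y)\in E_o: x,y\in B^o_n\}$; - $B_n'=B_n^o\cup\bigcup_{e\in E_n^o}V_e$ (with $V_e$ taken for whichever orientation of $e$ lies in $E_o^+$); - $B_n=\operatorname{int}(B_n')$. Here closures, interiors and boundaries are taken with respect to the graph $(V,E)$. Then: (1) $\partial B_n\subseteq V_o$; (2) $B_{d_\sigma}(\bar x,R_n-3)\subseteq B_n\subseteq B_{d_\sigma}(\bar x,R_n)$; (3) for all $n\ge1$, if $x\in\partial B_{n-1}$ and $y\in\partial B_n$, then $d_\sigma(x,y)\ge R_{n-1}-3$.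
   Context: **Weighted graphs.** A simple weighted graph $(V,w,\mu)$ consists of a countably infinite set $V$, a symmetric function $w:V\times V\to[0,\infty)$ and a function $\mu:V\to(0,\infty)$. The graph with edges $\{x\sim y:w(x,y)>0\}$ is assumed to be locally finite, connected, and without loops or multiple edges. **Adapted weights and metrics.** An adapted weight is a symmetric $\sigma:E\to(0,1]$ with $\frac1{\mu(x)}\sum_y w(x,y)\sigma(x,y)^2\le1$ for all $x$. The adapted path metric $d_\sigma(x,y)$ is the infimum of $\sum_i\sigma(x_i,x_{i+1})$ over paths $x=x_0\sim\cdots\sim x_n=y$. Closed balls are $B_d(x,r)=\{y:d(x,y)\le r\}$. **Modified graph.** Fix an orientation $E_o^+$ of $E_o$, and let $\mathfrak n:E_o\to\mathbb N_+$ be symmetric with $\mathfrak n\ge2$. For $e=(x,y)\in E_o^+$, add distinct new vertices $V_e=\{x^e_1,\dots,x^e_{\mathfrak n(e)-1}\}$, set $x_0^e=x$, $x^e_{\mathfrak n(e)}=y$, and replace the edge $x\sim y$ by the path $x^e_0\sim\cdots\sim x^e_{\mathfrak n(e)}$; $E$ is the resulting edge set on $V=V_o\cup\bigcup_eV_e$. Weights and measure: - $w(x^e_i,x^e_{i+1})=\mathfrak n(e)w_o(e)$, symmetric, and $w=0$ otherwise; - $\mu=\mu_o$ on $V_o$, and $\mu(x^e_i)=2w_o(e)\sigma_o(e)^2/\mathfrak n(e)$; - $\sigma(x^e_i,x^e_{i+1})=\sigma_o(e)/\mathfrak n(e)$. **Graph closure, boundary, interior.** For finite $K\subseteq V$: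 - $\mathrm{cl}(K)=K\cup\{x:\exists y\in K,\ x\sim y\}$; - $\partial K=\mathrm{cl}(K)\setminus K$; - $\operatorname{int}(K)$ is the largest $L\subseteq K$ with $\mathrm{cl}(L)\subseteq K$. *)

theory Defs
  imports Complex_Main "HOL-Library.Countable_Set"
begin

definition edges :: "('a \<Rightarrow> 'a \<Rightarrow> real) \<Rightarrow> ('a \<times> 'a) set" where
  "edges w = {(x, y). w x y > 0}"

definition path_in :: "('a \<times> 'a) set \<Rightarrow> 'a list \<Rightarrow> 'a \<Rightarrow> 'a \<Rightarrow> bool" where
  "path_in E xs u v \<longleftrightarrow> xs \<noteq> [] \<and> hd xs = u \<and> last xs = v \<and>
     (\<forall>i < length xs - 1. (xs ! i, xs ! Suc i) \<in> E)"

definition path_len :: "('a \<Rightarrow> 'a \<Rightarrow> real) \<Rightarrow> 'a list \<Rightarrow> real" where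
  "path_len \<sigma> xs = (\<Sum>i < length xs - 1. \<sigma> (xs ! i) (xs ! Suc i))"

definition path_dist :: "('a \<times> 'a) set \<Rightarrow> ('a \<Rightarrow> 'a \<Rightarrow> real) \<Rightarrow> 'a \<Rightarrow> 'a \<Rightarrow> real" where
  "path_dist E \<sigma> u v = Inf {path_len \<sigma> xs | xs. path_in E xs u v}"

definition cball_path :: "'a set \<Rightarrow> ('a \<times> 'a) set \<Rightarrow> ('a \<Rightarrow> 'a \<Rightarrow> real) \<Rightarrow> 'a \<Rightarrow> real \<Rightarrow> 'a set" where
  "cball_path V E \<sigma> x r = {y \<in> V. path_dist E \<sigma> x y \<le> r}"

definition simple_weighted_graph :: "'a set \<Rightarrow> ('a \<Rightarrow> 'a \<Rightarrow> real) \<Rightarrow> ('a \<Rightarrow> real) \<Rightarrow> bool" where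
  "simple_weighted_graph V w \<mu> \<longleftrightarrow>
     countable V \<and> infinite V \<and>
     (\<forall>x y. w x y = w y x) \<and> (\<forall>x y. 0 \<le> w x y) \<and>
     (\<forall>x y. 0 < w x y \<longrightarrow> x \<in> V \<and> y \<in> V) \<and>
     (\<forall>x \<in> V. 0 < \<mu> x) \<and>
     (\<forall>x. w x x = 0) \<and>
     (\<forall>x \<in> V. finite {y. 0 < w x y}) \<and>
     (\<forall>x \<in> V. \<forall>y \<in> V. \<exists>xs. path_in (edges w) xs x y)"

definition adapted_weight :: "'a set \<Rightarrow> ('a \<Rightarrow> 'a \<Rightarrow> real) \<Rightarrow> ('a \<Rightarrow> real) \<Rightarrow> ('a \<Rightarrow> 'a \<Rightarrow> real) \<Rightarrow> bool" where
  "adapted_weight V w \<mu> \<sigma> \<longleftrightarrow>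
     (\<forall>(x, y) \<in> edges w. \<sigma> x y = \<sigma> y x \<and> 0 < \<sigma> x y \<and> \<sigma> x y \<le> 1) \<and>
     (\<forall>x \<in> V. (\<Sum>y \<in> {y. 0 < w x y}. w x y * (\<sigma> x y)\<^sup>2) / \<mu> x \<le> 1)"

definition orientation :: "('a \<times> 'a) set \<Rightarrow> ('a \<times> 'a) set \<Rightarrow> bool" where
  "orientation E Ep \<longleftrightarrow> Ep \<subseteq> E \<and>
     (\<forall>(x, y) \<in> E. ((x, y) \<in> Ep \<or> (y, x) \<in> Ep) \<and> \<not> ((x, y) \<in> Ep \<and> (y, x) \<in> Ep))"

text \<open>Vertices of the modified graph: original vertices, and subdivision vertices
  Sub x y i = x^e_i for e = (x,y) in E_o^+ and 1 <= i <= n(e)-1.\<close>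
datatype 'a mvert = Orig 'a | Sub 'a 'a nat

definition pt :: "('a \<Rightarrow> 'a \<Rightarrow> nat) \<Rightarrow> 'a \<Rightarrow> 'a \<Rightarrow> nat \<Rightarrow> 'a mvert" where
  "pt n x y i = (if i = 0 then Orig x else if i = n x y then Orig y else Sub x y i)"

definition sub_verts :: "('a \<Rightarrow> 'a \<Rightarrow> nat) \<Rightarrow> 'a \<Rightarrow> 'a \<Rightarrow> 'a mvert set" where
  "sub_verts n x y = {Sub x y i | i. 1 \<le> i \<and> i \<le> n x y - 1}"

definition mod_V :: "'a set \<Rightarrow> ('a \<times> 'a) set \<Rightarrow> ('a \<Rightarrow> 'a \<Rightarrow> nat) \<Rightarrow> 'a mvert set" where
  "mod_V V Ep n = Orig ` V \<union> (\<Union>(x, y) \<in> Ep. sub_verts n x y)"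

definition mod_E :: "('a \<times> 'a) set \<Rightarrow> ('a \<Rightarrow> 'a \<Rightarrow> nat) \<Rightarrow> ('a mvert \<times> 'a mvert) set" where
  "mod_E Ep n =
     (let P = {(pt n x y i, pt n x y (Suc i)) | x y i. (x, y) \<in> Ep \<and> i < n x y} in P \<union> P\<inverse>)"

text \<open>Modified weight, measure and adapted weight (values off edges are irrelevant).\<close>
fun mod_w :: "('a \<Rightarrow> 'a \<Rightarrow> real) \<Rightarrow> ('a \<times> 'a) set \<Rightarrow> ('a \<Rightarrow> 'a \<Rightarrow> nat) \<Rightarrow> 'a mvert \<Rightarrow> 'a mvert \<Rightarrow> real" where
  "mod_w w Ep n u v = (if (u, v) \<in> mod_E Ep n then
      (case (u, v) of (Sub x y i, _) \<Rightarrow> real (n x y) * w x y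
                    | (_, Sub x y i) \<Rightarrow> real (n x y) * w x y
                    | _ \<Rightarrow> 0) else 0)"

fun mod_mu :: "('a \<Rightarrow> 'a \<Rightarrow> real) \<Rightarrow> ('a \<Rightarrow> real) \<Rightarrow> ('a \<Rightarrow> 'a \<Rightarrow> real) \<Rightarrow> ('a \<Rightarrow> 'a \<Rightarrow> nat) \<Rightarrow> 'a mvert \<Rightarrow> real" where
  "mod_mu w \<mu> \<sigma> n (Orig a) = \<mu> a"
| "mod_mu w \<mu> \<sigma> n (Sub x y i) = 2 * w x y * (\<sigma> x y)\<^sup>2 / real (n x y)"

fun mod_sigma :: "('a \<Rightarrow> 'a \<Rightarrow> real) \<Rightarrow> ('a \<Rightarrow> 'a \<Rightarrow> nat) \<Rightarrow> 'a mvert \<Rightarrow> 'a mvert \<Rightarrow> real" where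
  "mod_sigma \<sigma> n (Sub x y i) _ = \<sigma> x y / real (n x y)"
| "mod_sigma \<sigma> n (Orig a) (Sub x y i) = \<sigma> x y / real (n x y)"
| "mod_sigma \<sigma> n (Orig a) (Orig b) = 0"

definition gcl :: "('b \<times> 'b) set \<Rightarrow> 'b set \<Rightarrow> 'b set" where
  "gcl E K = K \<union> {x. \<exists>y \<in> K. (x, y) \<in> E}"

definition gbdry :: "('b \<times> 'b) set \<Rightarrow> 'b set \<Rightarrow> 'b set" where
  "gbdry E K = gcl E K - K"

definition gint :: "('b \<times> 'b) set \<Rightarrow> 'b set \<Rightarrow> 'b set" where
  "gint E K = \<Union>{L. L \<subseteq> K \<and> gcl E L \<subseteq> K}"

definition Rn :: "nat \<Rightarrow> real" where
  "Rn k = 2 ^ (k + 4)"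

definition Bo :: "'a set \<Rightarrow> ('a \<times> 'a) set \<Rightarrow> ('a \<Rightarrow> 'a \<Rightarrow> nat) \<Rightarrow> ('a \<Rightarrow> 'a \<Rightarrow> real)
    \<Rightarrow> 'a \<Rightarrow> nat \<Rightarrow> 'a mvert set" where
  "Bo V Ep n \<sigma> xb k =
     cball_path (mod_V V Ep n) (mod_E Ep n) (mod_sigma \<sigma> n) (Orig xb) (Rn k - 1) \<inter> Orig ` V"

definition Eo :: "'a set \<Rightarrow> ('a \<Rightarrow> 'a \<Rightarrow> real) \<Rightarrow> ('a \<times> 'a) set \<Rightarrow> ('a \<Rightarrow> 'a \<Rightarrow> nat)
    \<Rightarrow> ('a \<Rightarrow> 'a \<Rightarrow> real) \<Rightarrow> 'a \<Rightarrow> nat \<Rightarrow> ('a \<times> 'a) set" where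
  "Eo V w Ep n \<sigma> xb k =
     {(x, y) \<in> edges w. Orig x \<in> Bo V Ep n \<sigma> xb k \<and> Orig y \<in> Bo V Ep n \<sigma> xb k}"

text \<open>V_e for the orientation of e lying in E_o^+.\<close>
definition Bprime :: "'a set \<Rightarrow> ('a \<Rightarrow> 'a \<Rightarrow> real) \<Rightarrow> ('a \<times> 'a) set \<Rightarrow> ('a \<Rightarrow> 'a \<Rightarrow> nat)
    \<Rightarrow> ('a \<Rightarrow> 'a \<Rightarrow> real) \<Rightarrow> 'a \<Rightarrow> nat \<Rightarrow> 'a mvert set" where
  "Bprime V w Ep n \<sigma> xb k =
     Bo V Ep n \<sigma> xb k \<union> (\<Union>(x, y) \<in> Eo V w Ep n \<sigma> xb k \<inter> Ep. sub_verts n x y)"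

definition Bn :: "'a set \<Rightarrow> ('a \<Rightarrow> 'a \<Rightarrow> real) \<Rightarrow> ('a \<times> 'a) set \<Rightarrow> ('a \<Rightarrow> 'a \<Rightarrow> nat)
    \<Rightarrow> ('a \<Rightarrow> 'a \<Rightarrow> real) \<Rightarrow> 'a \<Rightarrow> nat \<Rightarrow> 'a mvert set" where
  "Bn V w Ep n \<sigma> xb k = gint (mod_E Ep n) (Bprime V w Ep n \<sigma> xb k)"

end

theory Submission
  imports Defs
begin

text \<open>Each new vertex lies on a subdivided edge of total length \<open>\<sigma>\<^sub>o(e) \<le> 1\<close>, so it is within
  distance 1 of both endpoints of \<open>e\<close>, and all its neighbours lie on the same subdivided edge.
  Hence a new vertex of \<open>B\<^sub>n'\<close> is interior, which gives (1); (2) follows from the triangle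
  inequality through an endpoint of the relevant edge; and for (3), a boundary point of
  \<open>B\<^sub>n\<^sub>-\<^sub>1\<close> is an old vertex of \<open>B\<^sub>n\<^sub>-\<^sub>1\<^sup>o\<close>, at distance at most \<open>R\<^sub>n\<^sub>-\<^sub>1 - 1\<close> from the centre, while
  by (2) a boundary point of \<open>B\<^sub>n\<close> is at distance more than \<open>R\<^sub>n - 3 = 2 R\<^sub>n\<^sub>-\<^sub>1 - 3\<close>.\<close>

lemma path_in_singleton [simp]: "path_in E [a] u v \<longleftrightarrow> a = u \<and> a = v"
  by (auto simp: path_in_def)

lemma path_in_Cons_Cons:
  "path_in E (a # b # l) u v \<longleftrightarrow> a = u \<and> (a, b) \<in> E \<and> path_in E (b # l) b v"
proof -
  have "(\<forall>i < length (a # b # l) - 1. ((a # b # l) ! i, (a # b # l) ! Suc i) \<in> E) \<longleftrightarrow>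
        (a, b) \<in> E \<and> (\<forall>i < length (b # l) - 1. ((b # l) ! i, (b # l) ! Suc i) \<in> E)"
    by (simp add: All_less_Suc2)
  then show ?thesis by (auto simp: path_in_def)
qed

lemma path_len_singleton [simp]: "path_len s [a] = 0"
  by (simp add: path_len_def)

lemma path_len_Cons_Cons: "path_len s (a # b # l) = s a b + path_len s (b # l)"
  by (simp add: path_len_def sum.lessThan_Suc_shift del: sum.lessThan_Suc)

lemma path_in_Cons_cases:
  assumes "path_in E (a # xs) u v"
  obtains "xs = []" "a = u" "a = v"
  | b l where "xs = b # l" "a = u" "(a, b) \<in> E" "path_in E xs b v"
  using assms by (cases xs) (auto simp: path_in_Cons_Cons)

lemma path_in_append:
  assumes "path_in E xs u v" "path_in E ys v w"
  shows "path_in E (xs @ tl ys) u w \<and> path_len s (xs @ tl ys) = path_len s xs + path_len s ys"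
  using assms
proof (induction xs arbitrary: u)
  case Nil
  then show ?case by (simp add: path_in_def)
next
  case (Cons a xs)
  from Cons.prems(1) show ?case
  proof (cases rule: path_in_Cons_cases)
    case 1
    with Cons.prems(2) have "[a] @ tl ys = ys"
      by (cases ys) (auto simp: path_in_def)
    with 1 Cons.prems(2) show ?thesis by simp
  next
    case (2 b l)
    with Cons.IH[OF 2(4) Cons.prems(2)] show ?thesis
      by (simp add: path_in_Cons_Cons path_len_Cons_Cons)
  qed
qed

lemma path_in_rev:
  assumes "path_in E xs u v" and sym: "\<And>a b. (a, b) \<in> E \<Longrightarrow> (b, a) \<in> E \<and> s b a = s a b"
  shows "path_in E (rev xs) v u \<and> path_len s (rev xs) = path_len s xs"
  using assms(1)
proof (induction xs arbitrary: u)
  case Nil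
  then show ?case by (simp add: path_in_def)
next
  case (Cons a xs)
  from Cons.prems show ?case
  proof (cases rule: path_in_Cons_cases)
    case 1
    then show ?thesis by simp
  next
    case (2 b l)
    have edge: "path_in E [b, a] b u"
      using 2 sym by (simp add: path_in_Cons_Cons)
    from path_in_append[OF conjunct1[OF Cons.IH[OF 2(4)]] edge, of s]
      Cons.IH[OF 2(4)] sym[OF 2(3)] show ?thesis
      by (simp add: 2(1) path_len_Cons_Cons)
  qed
qed

lemma path_in_imp_rtrancl: "path_in E xs u v \<Longrightarrow> (u, v) \<in> E\<^sup>*"
proof (induction xs arbitrary: u)
  case Nil
  then show ?case by (simp add: path_in_def)
next
  case (Cons a xs)
  from Cons.prems show ?case
  proof (cases rule: path_in_Cons_cases)
    case (2 b l)
    with Cons.IH show ?thesis by (blast intro: converse_rtrancl_into_rtrancl)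
  qed simp
qed

lemma rtrancl_imp_path_in: "(u, v) \<in> E\<^sup>* \<Longrightarrow> \<exists>xs. path_in E xs u v"
proof (induction rule: converse_rtrancl_induct)
  case base
  have "path_in E [v] v v" by simp
  then show ?case ..
next
  case (step y z)
  then obtain xs where xs: "path_in E xs z v" by blast
  then obtain l where "xs = z # l" by (cases xs) (auto simp: path_in_def)
  with xs step(1) have "path_in E (y # xs) y v" by (simp add: path_in_Cons_Cons)
  then show ?case by blast
qed

context
  fixes E :: "('b \<times> 'b) set" and s :: "'b \<Rightarrow> 'b \<Rightarrow> real"
  assumes nonneg: "\<And>a b. (a, b) \<in> E \<Longrightarrow> 0 \<le> s a b"
begin

lemma path_len_nonneg: "path_in E xs u v \<Longrightarrow> 0 \<le> path_len s xs"
  unfolding path_len_def by (intro sum_nonneg) (auto simp: path_in_def nonneg)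

lemma path_dist_le_path_len: "path_in E xs u v \<Longrightarrow> path_dist E s u v \<le> path_len s xs"
  unfolding path_dist_def
  by (rule cInf_lower) (auto intro!: bdd_belowI[of _ 0] path_len_nonneg)

lemma path_dist_self_le: "path_dist E s u u \<le> 0"
  using path_dist_le_path_len[of "[u]" u u] by simp

lemma path_dist_edge_le: "(u, v) \<in> E \<Longrightarrow> path_dist E s u v \<le> s u v"
  using path_dist_le_path_len[of "[u, v]" u v] by (simp add: path_in_Cons_Cons path_len_Cons_Cons)

text \<open>Without reachability the infimum is taken over the empty set, whence the hypotheses.\<close>

lemma path_dist_triangle:
  assumes "(u, v) \<in> E\<^sup>*" "(v, w) \<in> E\<^sup>*"
  shows "path_dist E s u w \<le> path_dist E s u v + path_dist E s v w"
proof -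
  have uv: "{path_len s xs | xs. path_in E xs u v} \<noteq> {}"
    and vw: "{path_len s ys | ys. path_in E ys v w} \<noteq> {}"
    using rtrancl_imp_path_in assms by auto
  have "path_dist E s u w - path_len s ys \<le> path_len s xs"
    if "path_in E xs u v" "path_in E ys v w" for xs ys
    using path_dist_le_path_len path_in_append[OF that, of s] by fastforce
  then have "path_dist E s u w - path_len s ys \<le> path_dist E s u v" if "path_in E ys v w" for ys
    unfolding path_dist_def[of E s u v] using that by (intro cInf_greatest[OF uv]) auto
  then have "path_dist E s u w - path_dist E s u v \<le> path_dist E s v w"
    unfolding path_dist_def[of E s v w]
    by (intro cInf_greatest[OF vw]) (auto simp: path_dist_def algebra_simps)
  then show ?thesis by simp
qed

end

lemma path_dist_sym:
  assumes "\<And>a b. (a, b) \<in> E \<Longrightarrow> (b, a) \<in> E \<and> s b a = s a b"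
  shows "path_dist E s u v = path_dist E s v u"
proof -
  have incl: "{path_len s xs | xs. path_in E xs a b} \<subseteq> {path_len s xs | xs. path_in E xs b a}" for a b
  proof clarify
    fix xs assume "path_in E xs a b"
    from path_in_rev[OF this assms] show "\<exists>ys. path_len s xs = path_len s ys \<and> path_in E ys b a"
      by metis
  qed
  have "{path_len s xs | xs. path_in E xs u v} = {path_len s xs | xs. path_in E xs v u}"
    using incl[of u v] incl[of v u] by (rule subset_antisym)
  then show ?thesis
    unfolding path_dist_def by simp
qed

lemma gint_iff: "v \<in> gint E K \<longleftrightarrow> v \<in> K \<and> (\<forall>u. (u, v) \<in> E \<longrightarrow> u \<in> K)"
proof
  assume "v \<in> gint E K"
  then obtain L where "v \<in> L" "L \<subseteq> K" "gcl E L \<subseteq> K" by (auto simp: gint_def)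
  then show "v \<in> K \<and> (\<forall>u. (u, v) \<in> E \<longrightarrow> u \<in> K)" by (auto simp: gcl_def)
next
  assume "v \<in> K \<and> (\<forall>u. (u, v) \<in> E \<longrightarrow> u \<in> K)"
  then have "{v} \<subseteq> K" "gcl E {v} \<subseteq> K" by (auto simp: gcl_def)
  then show "v \<in> gint E K" by (auto simp: gint_def)
qed

lemma gbdry_gint: "z \<in> gbdry E (gint E K) \<Longrightarrow> z \<in> K \<and> z \<notin> gint E K"
  by (auto simp: gbdry_def gcl_def gint_iff)

lemma pt_eq_Orig_iff:
  "pt n a b j = Orig c \<longleftrightarrow> (j = 0 \<and> c = a) \<or> (j \<noteq> 0 \<and> j = n a b \<and> c = b)"
  by (auto simp: pt_def)

lemma pt_eq_Sub_iff: "pt n a b j = Sub x y i \<longleftrightarrow> j \<noteq> 0 \<and> j \<noteq> n a b \<and> a = x \<and> b = y \<and> j = i"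
  by (auto simp: pt_def)

lemma mem_sub_verts_iff: "u \<in> sub_verts n x y \<longleftrightarrow> (\<exists>i. u = Sub x y i \<and> 1 \<le> i \<and> i < n x y)"
  by (auto simp: sub_verts_def)

lemma pt_0 [simp]: "pt n x y 0 = Orig x"
  by (simp add: pt_def)

lemma Orig_in_mod_V: "a \<in> V \<Longrightarrow> Orig a \<in> mod_V V Ep n"
  by (auto simp: mod_V_def)

lemma Rn_Suc: "Rn (Suc k) = 2 * Rn k"
  by (simp add: Rn_def power_add)

locale subdivided_graph =
  fixes V :: "'a set" and w :: "'a \<Rightarrow> 'a \<Rightarrow> real" and \<sigma> :: "'a \<Rightarrow> 'a \<Rightarrow> real"
    and Ep :: "('a \<times> 'a) set" and n :: "'a \<Rightarrow> 'a \<Rightarrow> nat"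
  assumes Ep_subset: "Ep \<subseteq> edges w"
    and edge_oriented: "\<forall>(x, y) \<in> edges w. (x, y) \<in> Ep \<or> (y, x) \<in> Ep"
    and n_ge2: "\<forall>(x, y) \<in> Ep. 2 \<le> n x y"
    and \<sigma>_bounds: "\<forall>(x, y) \<in> Ep. 0 < \<sigma> x y \<and> \<sigma> x y \<le> 1"
    and edges_in_V: "\<forall>(x, y) \<in> edges w. x \<in> V \<and> y \<in> V"
    and connected: "\<forall>x \<in> V. \<forall>y \<in> V. \<exists>xs. path_in (edges w) xs x y"
begin

abbreviation "E \<equiv> mod_E Ep n"
abbreviation "s \<equiv> mod_sigma \<sigma> n"
abbreviation "d \<equiv> path_dist E s"

lemma mem_E_iff: "(u, v) \<in> E \<longleftrightarrow> (\<exists>x y i. (x, y) \<in> Ep \<and> i < n x y \<and>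
   ((u, v) = (pt n x y i, pt n x y (Suc i)) \<or> (v, u) = (pt n x y i, pt n x y (Suc i))))"
  unfolding mod_E_def Let_def by blast

lemma Ep_in_V: "(x, y) \<in> Ep \<Longrightarrow> x \<in> V \<and> y \<in> V"
  using Ep_subset edges_in_V by auto

lemma s_pt:
  assumes "(x, y) \<in> Ep" "i < n x y"
  shows "s (pt n x y i) (pt n x y (Suc i)) = \<sigma> x y / n x y"
    and "s (pt n x y (Suc i)) (pt n x y i) = \<sigma> x y / n x y"
  using n_ge2 assms by (auto simp: pt_def)

lemma pt_edge: "(x, y) \<in> Ep \<Longrightarrow> i < n x y \<Longrightarrow> (pt n x y i, pt n x y (Suc i)) \<in> E"
  unfolding mem_E_iff by blast

lemma E_cases:
  assumes "(u, v) \<in> E"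
  obtains x y i where "(x, y) \<in> Ep" "i < n x y"
    "(u, v) = (pt n x y i, pt n x y (Suc i)) \<or> (v, u) = (pt n x y i, pt n x y (Suc i))"
  using assms unfolding mem_E_iff by blast

lemma E_sym:
  assumes "(u, v) \<in> E"
  shows "(v, u) \<in> E \<and> s v u = s u v"
proof -
  obtain x y i where xyi: "(x, y) \<in> Ep" "i < n x y"
    and uv: "(u, v) = (pt n x y i, pt n x y (Suc i)) \<or> (v, u) = (pt n x y i, pt n x y (Suc i))"
    using E_cases[OF assms] .
  then have "(v, u) \<in> E" unfolding mem_E_iff by blast
  moreover have "s v u = s u v" using uv s_pt[OF xyi] by auto
  ultimately show ?thesis ..
qed

lemma s_nonneg:
  assumes "(u, v) \<in> E"
  shows "0 \<le> s u v"
proof -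
  obtain x y i where xyi: "(x, y) \<in> Ep" "i < n x y"
    and uv: "(u, v) = (pt n x y i, pt n x y (Suc i)) \<or> (v, u) = (pt n x y i, pt n x y (Suc i))"
    using E_cases[OF assms] .
  moreover have "0 \<le> \<sigma> x y / n x y" using \<sigma>_bounds xyi(1) by auto
  ultimately show ?thesis using s_pt[OF xyi] by auto
qed

lemma rtrancl_E_sym: "(u, v) \<in> E\<^sup>* \<Longrightarrow> (v, u) \<in> E\<^sup>*"
  by (induction rule: rtrancl_induct) (auto intro: converse_rtrancl_into_rtrancl dest: E_sym)

lemma d_sym: "d u v = d v u"
  by (rule path_dist_sym) (rule E_sym)

lemma d_triangle_rtrancl:
  "(u, v) \<in> E\<^sup>* \<Longrightarrow> (v, z) \<in> E\<^sup>* \<Longrightarrow> d u z \<le> d u v + d v z"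
  by (rule path_dist_triangle) (auto intro: s_nonneg)

lemma pt_dist_le:
  assumes "(x, y) \<in> Ep" "i \<le> j" "j \<le> n x y"
  shows "(pt n x y i, pt n x y j) \<in> E\<^sup>* \<and> d (pt n x y i) (pt n x y j) \<le> real (j - i) * (\<sigma> x y / n x y)"
  using assms(2,3)
proof (induction j rule: dec_induct)
  case base
  show ?case using path_dist_self_le[of E s] s_nonneg by auto
next
  case (step k)
  have edge: "(pt n x y k, pt n x y (Suc k)) \<in> E"
    using pt_edge assms(1) step.prems by simp
  have IH: "(pt n x y i, pt n x y k) \<in> E\<^sup>*" "d (pt n x y i) (pt n x y k) \<le> real (k - i) * (\<sigma> x y / n x y)"
    using step.IH step.prems by simp_all
  have edge_le: "d (pt n x y k) (pt n x y (Suc k)) \<le> \<sigma> x y / n x y"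
    using path_dist_edge_le[of E s, OF s_nonneg edge] s_pt(1)[OF assms(1)] step.prems by simp
  have "d (pt n x y i) (pt n x y (Suc k)) \<le> d (pt n x y i) (pt n x y k) + d (pt n x y k) (pt n x y (Suc k))"
    using d_triangle_rtrancl IH(1) edge by blast
  also have "\<dots> \<le> real (k - i) * (\<sigma> x y / n x y) + \<sigma> x y / n x y"
    using IH(2) edge_le by linarith
  also have "\<dots> = real (Suc k - i) * (\<sigma> x y / n x y)"
    using step.hyps by (simp add: Suc_diff_le algebra_simps add_divide_distrib diff_divide_distrib)
  finally show ?case using IH edge by auto
qed

lemma pt_dist_le_1:
  assumes "(x, y) \<in> Ep" "i \<le> n x y" "j \<le> n x y"
  shows "(pt n x y i, pt n x y j) \<in> E\<^sup>* \<and> d (pt n x y i) (pt n x y j) \<le> 1"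
proof -
  have le_1: "real (b - a) * (\<sigma> x y / n x y) \<le> 1" if "b \<le> n x y" for a b
  proof -
    have "real (b - a) * (\<sigma> x y / n x y) \<le> real (n x y) * (\<sigma> x y / n x y)"
      using that \<sigma>_bounds assms(1) by (intro mult_right_mono) auto
    also have "\<dots> = \<sigma> x y" using n_ge2 assms(1) by auto
    finally show ?thesis using \<sigma>_bounds assms(1) by auto
  qed
  show ?thesis
  proof (cases "i \<le> j")
    case True
    with pt_dist_le[OF assms(1) True assms(3)] le_1[OF assms(3), of i] show ?thesis
      by (meson order_trans)
  next
    case False
    then have "j \<le> i" by simp
    with pt_dist_le[OF assms(1) this assms(2)] le_1[OF assms(2), of j] show ?thesis
      by (metis d_sym order_trans rtrancl_E_sym)
  qed
qed

lemma pt_n: "(x, y) \<in> Ep \<Longrightarrow> pt n x y (n x y) = Orig y"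
  using n_ge2 by (auto simp: pt_def)

lemma sub_vert_pt:
  assumes "u \<in> sub_verts n x y"
  obtains i where "u = pt n x y i" "i \<le> n x y"
proof -
  from assms obtain i where i: "u = Sub x y i" "1 \<le> i" "i < n x y"
    by (auto simp: mem_sub_verts_iff)
  then have "u = pt n x y i" by (simp add: pt_def)
  with i(3) show thesis using that by simp
qed

lemma sub_vert_dist_le_1:
  assumes "(x, y) \<in> Ep" "u \<in> sub_verts n x y" "c \<in> {x, y}"
  shows "(u, Orig c) \<in> E\<^sup>* \<and> d u (Orig c) \<le> 1"
proof -
  obtain i where "u = pt n x y i" "i \<le> n x y" using sub_vert_pt assms(2) .
  then show ?thesis using assms pt_dist_le_1[OF assms(1), of i 0] pt_dist_le_1[OF assms(1), of i "n x y"]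
    by (auto simp: pt_n)
qed

lemma endpoints_dist_le_1:
  assumes "(x, y) \<in> Ep" "a \<in> {x, y}" "c \<in> {x, y}"
  shows "(Orig a, Orig c) \<in> E\<^sup>* \<and> d (Orig a) (Orig c) \<le> 1"
  using assms pt_dist_le_1[OF assms(1), of 0 "n x y"] pt_dist_le_1[OF assms(1), of "n x y" 0]
    pt_dist_le_1[OF assms(1), of 0 0] pt_dist_le_1[OF assms(1), of "n x y" "n x y"]
  by (auto simp: pt_n)

lemma Orig_rtrancl_E:
  assumes "a \<in> V" "b \<in> V"
  shows "(Orig a, Orig b) \<in> E\<^sup>*"
proof -
  obtain xs where "path_in (edges w) xs a b" using connected assms by blast
  then have "(a, b) \<in> (edges w)\<^sup>*" by (rule path_in_imp_rtrancl)
  then show ?thesis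
  proof (induction rule: rtrancl_induct)
    case (step y z)
    from step.hyps(2) edge_oriented have "(y, z) \<in> Ep \<or> (z, y) \<in> Ep" by blast
    then have "(Orig y, Orig z) \<in> E\<^sup>*" using endpoints_dist_le_1 by blast
    with step.IH show ?case by (rule rtrancl_trans)
  qed simp
qed

lemma mod_V_rtrancl_E:
  assumes "u \<in> mod_V V Ep n" "v \<in> mod_V V Ep n"
  shows "(u, v) \<in> E\<^sup>*"
proof -
  have "\<exists>a \<in> V. (u, Orig a) \<in> E\<^sup>*" if "u \<in> mod_V V Ep n" for u
    using that Ep_in_V sub_vert_dist_le_1 unfolding mod_V_def by blast
  with assms obtain a b where "a \<in> V" "(u, Orig a) \<in> E\<^sup>*" "b \<in> V" "(v, Orig b) \<in> E\<^sup>*"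
    by blast
  then show ?thesis
    using Orig_rtrancl_E rtrancl_E_sym by (meson rtrancl_trans)
qed

lemma d_triangle:
  "u \<in> mod_V V Ep n \<Longrightarrow> v \<in> mod_V V Ep n \<Longrightarrow> z \<in> mod_V V Ep n \<Longrightarrow> d u z \<le> d u v + d v z"
  using d_triangle_rtrancl mod_V_rtrancl_E by blast

lemma neighbour_of_sub_vert:
  assumes "(x, y) \<in> Ep" "z \<in> sub_verts n x y" "(u, z) \<in> E"
  shows "u \<in> Orig ` {x, y} \<union> sub_verts n x y"
proof -
  obtain i where i: "z = Sub x y i" "1 \<le> i" "i < n x y"
    using assms(2) by (auto simp: mem_sub_verts_iff)
  obtain a b j where j: "(a, b) \<in> Ep" "j < n a b"
    "(u, z) = (pt n a b j, pt n a b (Suc j)) \<or> (z, u) = (pt n a b j, pt n a b (Suc j))"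
    using E_cases[OF assms(3)] .
  from j(3) show ?thesis
  proof
    assume "(u, z) = (pt n a b j, pt n a b (Suc j))"
    with i have "pt n a b (Suc j) = Sub x y i" "u = pt n a b j" by simp_all
    then have "u = pt n x y j" "Suc j = i" by (auto simp: pt_eq_Sub_iff)
    with i show ?thesis by (auto simp: pt_def mem_sub_verts_iff)
  next
    assume "(z, u) = (pt n a b j, pt n a b (Suc j))"
    with i have "pt n a b j = Sub x y i" "u = pt n a b (Suc j)" by simp_all
    then have "u = pt n x y (Suc i)" "j = i" by (auto simp: pt_eq_Sub_iff)
    with i show ?thesis by (auto simp: pt_def mem_sub_verts_iff)
  qed
qed

lemma neighbour_of_Orig:
  assumes "(u, Orig c) \<in> E"
  obtains x y where "(x, y) \<in> Ep" "u \<in> sub_verts n x y" "c \<in> {x, y}"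
proof -
  obtain a b j where j: "(a, b) \<in> Ep" "j < n a b"
    "(u, Orig c) = (pt n a b j, pt n a b (Suc j)) \<or> (Orig c, u) = (pt n a b j, pt n a b (Suc j))"
    using E_cases[OF assms] .
  have n2: "2 \<le> n a b" using n_ge2 j(1) by auto
  from j(3) have "u \<in> sub_verts n a b \<and> c \<in> {a, b}"
  proof
    assume h: "(u, Orig c) = (pt n a b j, pt n a b (Suc j))"
    then have "Suc j = n a b" "c = b" using pt_eq_Orig_iff[of n a b "Suc j" c] by auto
    with h n2 show ?thesis by (auto simp: pt_def mem_sub_verts_iff)
  next
    assume h: "(Orig c, u) = (pt n a b j, pt n a b (Suc j))"
    then have "j = 0" "c = a" using pt_eq_Orig_iff[of n a b j c] j(2) by auto
    with h n2 show ?thesis by (auto simp: pt_def mem_sub_verts_iff)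
  qed
  with j(1) show thesis using that by blast
qed

context
  fixes xb :: 'a
  assumes xb: "xb \<in> V"
begin

abbreviation "ball r \<equiv> cball_path (mod_V V Ep n) E s (Orig xb) r"
abbreviation "B\<^sub>o k \<equiv> Bo V Ep n \<sigma> xb k"
abbreviation "B' k \<equiv> Bprime V w Ep n \<sigma> xb k"
abbreviation "B k \<equiv> Bn V w Ep n \<sigma> xb k"

lemma Orig_in_B\<^sub>o_iff: "Orig a \<in> B\<^sub>o k \<longleftrightarrow> a \<in> V \<and> d (Orig xb) (Orig a) \<le> Rn k - 1"
  by (auto simp: Bo_def cball_path_def Orig_in_mod_V)

lemma B\<^sub>o_subset_Orig: "B\<^sub>o k \<subseteq> Orig ` V"
  by (auto simp: Bo_def)

lemma B'_cases:
  assumes "z \<in> B' k"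
  obtains "z \<in> B\<^sub>o k"
  | x y where "(x, y) \<in> Ep" "Orig x \<in> B\<^sub>o k" "Orig y \<in> B\<^sub>o k" "z \<in> sub_verts n x y"
  using assms unfolding Bprime_def Eo_def by blast

lemma sub_verts_subset_B':
  assumes "(x, y) \<in> Ep" "Orig x \<in> B\<^sub>o k" "Orig y \<in> B\<^sub>o k"
  shows "Orig ` {x, y} \<union> sub_verts n x y \<subseteq> B' k"
proof -
  have "(x, y) \<in> Eo V w Ep n \<sigma> xb k \<inter> Ep" using assms Ep_subset unfolding Eo_def by auto
  then show ?thesis using assms unfolding Bprime_def by fastforce
qed

lemma B'_subset_mod_V: "B' k \<subseteq> mod_V V Ep n"
  by (auto elim!: B'_cases dest: subsetD[OF B\<^sub>o_subset_Orig] simp: mod_V_def)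

lemma boundary_B_subset_Orig: "gbdry E (B k) \<subseteq> Orig ` V"
proof
  fix z assume "z \<in> gbdry E (B k)"
  then have z: "z \<in> B' k" "z \<notin> gint E (B' k)"
    unfolding Bn_def by (simp_all add: gbdry_gint)
  from z(1) show "z \<in> Orig ` V"
  proof (cases rule: B'_cases)
    case 1
    then show ?thesis using B\<^sub>o_subset_Orig by auto
  next
    case (2 x y)
    then have "\<forall>u. (u, z) \<in> E \<longrightarrow> u \<in> B' k"
      using neighbour_of_sub_vert sub_verts_subset_B' by blast
    with z show ?thesis unfolding gint_iff by blast
  qed
qed

lemma B_subset_ball: "B k \<subseteq> ball (Rn k)"
proof
  fix z assume "z \<in> B k"
  then have z: "z \<in> B' k" unfolding Bn_def by (simp add: gint_iff)
  then have zV: "z \<in> mod_V V Ep n" using B'_subset_mod_V by blast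
  from z have "d (Orig xb) z \<le> Rn k"
  proof (cases rule: B'_cases)
    case 1
    then have "d (Orig xb) z \<le> Rn k - 1" by (simp add: Bo_def cball_path_def)
    then show ?thesis by simp
  next
    case (2 x y)
    have "x \<in> V" using Ep_in_V[OF 2(1)] by simp
    then have "d (Orig xb) z \<le> d (Orig xb) (Orig x) + d (Orig x) z"
      using d_triangle[OF Orig_in_mod_V[OF xb] Orig_in_mod_V zV] by blast
    moreover have "d (Orig x) z \<le> 1"
      using sub_vert_dist_le_1[OF 2(1,4), of x] by (simp add: d_sym)
    ultimately show ?thesis using 2(2) by (simp add: Orig_in_B\<^sub>o_iff)
  qed
  with zV show "z \<in> ball (Rn k)" by (simp add: cball_path_def)
qed

lemma ends_in_B\<^sub>o:
  assumes "(x, y) \<in> Ep" "u \<in> mod_V V Ep n" "d (Orig xb) u \<le> Rn k - 2"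
    and near: "\<And>c. c \<in> {x, y} \<Longrightarrow> d u (Orig c) \<le> 1"
  shows "Orig x \<in> B\<^sub>o k \<and> Orig y \<in> B\<^sub>o k"
proof -
  have "Orig c \<in> B\<^sub>o k" if c: "c \<in> {x, y}" for c
  proof -
    have cV: "c \<in> V" using Ep_in_V[OF assms(1)] c by auto
    have "d (Orig xb) (Orig c) \<le> d (Orig xb) u + d u (Orig c)"
      using d_triangle[OF Orig_in_mod_V[OF xb] assms(2) Orig_in_mod_V[OF cV]] .
    with near[OF c] assms(3) cV show ?thesis by (simp add: Orig_in_B\<^sub>o_iff)
  qed
  then show ?thesis by blast
qed

lemma ball_subset_B: "ball (Rn k - 3) \<subseteq> B k"
proof
  fix z assume "z \<in> ball (Rn k - 3)"
  then have zV: "z \<in> mod_V V Ep n" and dz: "d (Orig xb) z \<le> Rn k - 3"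
    by (auto simp: cball_path_def)
  consider a where "z = Orig a" "a \<in> V" | x y where "(x, y) \<in> Ep" "z \<in> sub_verts n x y"
    using zV unfolding mod_V_def by blast
  then show "z \<in> B k"
  proof cases
    case 1
    have "u \<in> B' k" if uz: "(u, z) \<in> E" for u
    proof -
      from uz 1(1) have "(u, Orig a) \<in> E" by simp
      then obtain x y where xy: "(x, y) \<in> Ep" "u \<in> sub_verts n x y" "a \<in> {x, y}"
        by (rule neighbour_of_Orig)
      have "Orig x \<in> B\<^sub>o k \<and> Orig y \<in> B\<^sub>o k"
        using ends_in_B\<^sub>o[OF xy(1) zV] dz endpoints_dist_le_1[OF xy(1)] xy(3) 1(1) by auto
      then show ?thesis using sub_verts_subset_B'[OF xy(1)] xy(2) by blast
    qed
    moreover have "z \<in> B' k"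
      using 1 dz zV by (auto simp: Bprime_def Bo_def cball_path_def)
    ultimately show ?thesis unfolding Bn_def gint_iff by blast
  next
    case 2
    have "Orig x \<in> B\<^sub>o k \<and> Orig y \<in> B\<^sub>o k"
      using ends_in_B\<^sub>o[OF 2(1) zV] dz sub_vert_dist_le_1[OF 2] by auto
    then have "Orig ` {x, y} \<union> sub_verts n x y \<subseteq> B' k"
      using sub_verts_subset_B'[OF 2(1)] by blast
    then show ?thesis
      using neighbour_of_sub_vert[OF 2] 2(2) unfolding Bn_def gint_iff by blast
  qed
qed

lemma dist_boundaries_ge:
  assumes "1 \<le> k" "x \<in> gbdry E (B (k - 1))" "y \<in> gbdry E (B k)"
  shows "Rn (k - 1) - 3 \<le> d x y"
proof -
  obtain a where a: "x = Orig a" "a \<in> V"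
    using subsetD[OF boundary_B_subset_Orig assms(2)] by (rule imageE)
  have "x \<in> B' (k - 1)"
    using gbdry_gint[of x E "B' (k - 1)"] assms(2) unfolding Bn_def by simp
  then have dx: "d (Orig xb) x \<le> Rn (k - 1) - 1"
    using a by (auto elim: B'_cases simp: Orig_in_B\<^sub>o_iff mem_sub_verts_iff)
  have yB: "y \<in> B' k" "y \<notin> B k"
    using gbdry_gint[of y E "B' k"] assms(3) unfolding Bn_def by simp_all
  have yV: "y \<in> mod_V V Ep n"
    using subsetD[OF B'_subset_mod_V yB(1)] .
  have dy: "Rn k - 3 < d (Orig xb) y"
  proof (rule ccontr)
    assume "\<not> Rn k - 3 < d (Orig xb) y"
    with yV have "y \<in> ball (Rn k - 3)" by (simp add: cball_path_def)
    with ball_subset_B yB(2) show False by blast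
  qed
  have "d (Orig xb) y \<le> d (Orig xb) x + d x y"
    using d_triangle[OF Orig_in_mod_V[OF xb] Orig_in_mod_V[OF a(2)] yV] a(1) by simp
  moreover have "Rn k = 2 * Rn (k - 1)"
    using assms(1) Rn_Suc[of "k - 1"] by simp
  ultimately show ?thesis using dx dy by linarith
qed

end

end

theorem lemma4p3:
  fixes V :: "'a set" and w :: "'a \<Rightarrow> 'a \<Rightarrow> real" and \<mu> :: "'a \<Rightarrow> real"
    and \<sigma> :: "'a \<Rightarrow> 'a \<Rightarrow> real" and Ep :: "('a \<times> 'a) set"
    and n :: "'a \<Rightarrow> 'a \<Rightarrow> nat" and xb :: 'a
  assumes graph: "simple_weighted_graph V w \<mu>"
    and adapted: "adapted_weight V w \<mu> \<sigma>"
    and orient: "orientation (edges w) Ep"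
    and "\<forall>(x, y) \<in> edges w. n x y = n y x"
    and n_ge2: "\<forall>(x, y) \<in> edges w. 2 \<le> n x y"
    and xb: "xb \<in> V"
    and "\<forall>v \<in> mod_V V Ep n. \<forall>r.
        finite (cball_path (mod_V V Ep n) (mod_E Ep n) (mod_sigma \<sigma> n) v r)"
  shows
    "(\<forall>k. gbdry (mod_E Ep n) (Bn V w Ep n \<sigma> xb k) \<subseteq> Orig ` V)
   \<and> (\<forall>k. cball_path (mod_V V Ep n) (mod_E Ep n) (mod_sigma \<sigma> n) (Orig xb) (Rn k - 3)
            \<subseteq> Bn V w Ep n \<sigma> xb k
        \<and> Bn V w Ep n \<sigma> xb k
            \<subseteq> cball_path (mod_V V Ep n) (mod_E Ep n) (mod_sigma \<sigma> n) (Orig xb) (Rn k))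
   \<and> (\<forall>k \<ge> 1. \<forall>x \<in> gbdry (mod_E Ep n) (Bn V w Ep n \<sigma> xb (k - 1)).
        \<forall>y \<in> gbdry (mod_E Ep n) (Bn V w Ep n \<sigma> xb k).
          Rn (k - 1) - 3 \<le> path_dist (mod_E Ep n) (mod_sigma \<sigma> n) x y)"
proof -
  have Ep_subset: "Ep \<subseteq> edges w"
    using orient by (simp add: orientation_def)
  interpret subdivided_graph V w \<sigma> Ep n
  proof
    show "\<forall>(x, y) \<in> edges w. (x, y) \<in> Ep \<or> (y, x) \<in> Ep"
      using orient by (auto simp: orientation_def)
    show "\<forall>(x, y) \<in> Ep. 2 \<le> n x y"
      using n_ge2 Ep_subset by auto
    show "\<forall>(x, y) \<in> Ep. 0 < \<sigma> x y \<and> \<sigma> x y \<le> 1"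
      using adapted Ep_subset by (auto simp: adapted_weight_def)
    show "\<forall>(x, y) \<in> edges w. x \<in> V \<and> y \<in> V"
      using graph by (auto simp: simple_weighted_graph_def edges_def)
    show "\<forall>x \<in> V. \<forall>y \<in> V. \<exists>xs. path_in (edges w) xs x y"
      using graph by (simp add: simple_weighted_graph_def)
  qed (fact Ep_subset)
  show ?thesis
    using boundary_B_subset_Orig[OF xb] ball_subset_B[OF xb] B_subset_ball[OF xb]
      dist_boundaries_ge[OF xb] by blast
qed

end
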